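(* Let $G=(V,E)$ be a graph on $V=\{1,\ldots,n\}$ and $b(\mathbf x)=\sum_{ij\in E}a_{ij}x_ix_j$ with real coefficients. Let $c$ be a real number such that $\sum_{ij\in\gamma(X)}|a_{ij}|\leqslant c\left(\mu^+(X)-\mu^-(X)\right)$ for all $X\subseteq V$. Then $\operatorname{mcgap}[b](\mathbf x)\leqslant c\,\operatorname{chgap}[b](\mathbf x)$ for all $\mathbf x\in[0,1]^n$.
   Context: $B=\{(\mathbf x,z)\in[0,1]^n\times\mathbb R:z=b(\mathbf x)\}$. The McCormick polytopes are $P=\{(\mathbf x,\mathbf y)\in[0,1]^n\times[0,1]^{|E|}: y_{ij}\le x_i,\ y_{ij}\le x_j,\ y_{ij}\ge x_i+x_j-1\ \forall ij\in E\}$ and $Q=\{(\mathbf x,z)\in[0,1]^n\times\mathbb R:\exists\mathbf y\in[0,1]^{|E|}\text{ with }(\mathbf x,\mathbf y)\in P,\ z=\sum_{ij\in E}a_{ij}y_{ij}\}$. $\operatorname{cav}[b](\mathbf x)=\max\{z:(\mathbf x,z)\in\operatorname{conv}(B)\}$, $\operatorname{vex}[b](\mathbf x)=\min\{z:(\mathbf x,z)\in\operatorname{conv}(B)\}$, $\operatorname{mcu}[b](\mathbf x)=\max\{z:(\mathbf x,z)\in Q\}$, $\operatorname{mcl}[b](\mathbf x)=\min\{z:(\mathbf x,z)\in Q\}$, $\operatorname{chgap}[b]=\operatorname{cav}[b]-\operatorname{vex}[b]$, $\operatorname{mcgap}[b]=\operatorname{mcu}[b]-\operatorname{mcl}[b]$.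 For $X\subseteq V$, $\gamma(X)$ is the set of edges with both endpoints in $X$; for disjoint $U_1,U_2$, $\delta(U_1,U_2)$ is the set of edges with one endpoint in each; $\mu^+(X)=\max\{\sum_{ij\in\delta(U_1,U_2)}a_{ij}:U_1\cup U_2=X,\ U_1\cap U_2=\emptyset\}$ and $\mu^-(X)$ is the corresponding minimum. *)

theory Defs
  imports "HOL-Analysis.Analysis"
begin

text \<open>Vertices: the finite type 'n (standing for V = {1..n}); edges: 2-element vertex sets;
  coefficients a :: 'n set \<Rightarrow> real (a e = a_ij for e = {i,j}). Points x \<in> [0,1]^n are real^'n.\<close>

definition graph :: "'n set set \<Rightarrow> bool" where
  "graph E \<longleftrightarrow> (\<forall>e\<in>E. card e = 2)"

definition unitcube :: "(real^'n::finite) set" where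
  "unitcube = {x. \<forall>i. 0 \<le> x$i \<and> x$i \<le> 1}"

definition bilin :: "'n::finite set set \<Rightarrow> ('n set \<Rightarrow> real) \<Rightarrow> real^'n \<Rightarrow> real" where
  "bilin E a x = (\<Sum>e\<in>E. a e * (\<Prod>i\<in>e. x$i))"

definition graphB :: "'n::finite set set \<Rightarrow> ('n set \<Rightarrow> real) \<Rightarrow> ((real^'n) \<times> real) set" where
  "graphB E a = {(x, z). x \<in> unitcube \<and> z = bilin E a x}"

definition cav :: "'n::finite set set \<Rightarrow> ('n set \<Rightarrow> real) \<Rightarrow> real^'n \<Rightarrow> real" where
  "cav E a x = Sup {z. (x, z) \<in> convex hull (graphB E a)}"

definition vex :: "'n::finite set set \<Rightarrow> ('n set \<Rightarrow> real) \<Rightarrow> real^'n \<Rightarrow> real" where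
  "vex E a x = Inf {z. (x, z) \<in> convex hull (graphB E a)}"

text \<open>McCormick polytope P (y indexed by edges; values off E are irrelevant).\<close>
definition mcP :: "'n::finite set set \<Rightarrow> real^'n \<Rightarrow> ('n set \<Rightarrow> real) \<Rightarrow> bool" where
  "mcP E x y \<longleftrightarrow> x \<in> unitcube \<and>
     (\<forall>e\<in>E. 0 \<le> y e \<and> y e \<le> 1 \<and> (\<forall>i\<in>e. y e \<le> x$i) \<and> (\<Sum>i\<in>e. x$i) - 1 \<le> y e)"

definition mcQ :: "'n::finite set set \<Rightarrow> ('n set \<Rightarrow> real) \<Rightarrow> ((real^'n) \<times> real) set" where
  "mcQ E a = {(x, z). \<exists>y. mcP E x y \<and> z = (\<Sum>e\<in>E. a e * y e)}"

definition mcu :: "'n::finite set set \<Rightarrow> ('n set \<Rightarrow> real) \<Rightarrow> real^'n \<Rightarrow> real" where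
  "mcu E a x = Sup {z. (x, z) \<in> mcQ E a}"

definition mcl :: "'n::finite set set \<Rightarrow> ('n set \<Rightarrow> real) \<Rightarrow> real^'n \<Rightarrow> real" where
  "mcl E a x = Inf {z. (x, z) \<in> mcQ E a}"

definition chgap :: "'n::finite set set \<Rightarrow> ('n set \<Rightarrow> real) \<Rightarrow> real^'n \<Rightarrow> real" where "chgap E a x = cav E a x - vex E a x"
definition mcgap :: "'n::finite set set \<Rightarrow> ('n set \<Rightarrow> real) \<Rightarrow> real^'n \<Rightarrow> real" where "mcgap E a x = mcu E a x - mcl E a x"

definition gammaE :: "'n::finite set set \<Rightarrow> 'n set \<Rightarrow> 'n set set" where
  "gammaE E X = {e\<in>E. e \<subseteq> X}"

definition deltaE :: "'n::finite set set \<Rightarrow> 'n set \<Rightarrow> 'n set \<Rightarrow> 'n set set" where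
  "deltaE E U1 U2 = {e\<in>E. e \<inter> U1 \<noteq> {} \<and> e \<inter> U2 \<noteq> {}}"

definition mu_plus :: "'n::finite set set \<Rightarrow> ('n set \<Rightarrow> real) \<Rightarrow> 'n set \<Rightarrow> real" where
  "mu_plus E a X = Max {\<Sum>e\<in>deltaE E U1 U2. a e | U1 U2. U1 \<union> U2 = X \<and> U1 \<inter> U2 = {}}"

definition mu_minus :: "'n::finite set set \<Rightarrow> ('n set \<Rightarrow> real) \<Rightarrow> 'n set \<Rightarrow> real" where
  "mu_minus E a X = Min {\<Sum>e\<in>deltaE E U1 U2. a e | U1 U2. U1 \<union> U2 = X \<and> U1 \<inter> U2 = {}}"

end

theory Submission
  imports Defs
begin

text \<open>Write slack t = min t (1 - t). Any two McCormick points over x differ on an edge ij by at most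
  min (slack x_i) (slack x_j), so the McCormick gap is bounded by
  G(x) = \<Sum>ij |a_ij| min (slack x_i) (slack x_j). To bound G by the convex hull gap, peel off the
  fractional coordinates Y of x: with d the least slack on Y,
  x = d v_P + d v_(Y-P) + (1 - 2d) x', where v_P rounds the coordinates in Y to the indicator of P
  and x' has fewer fractional coordinates. Since b(v_P) + b(v_(Y-P)) = b(v_{}) + b(v_Y) - a(\<delta>(P, Y-P)),
  choosing P to attain \<mu>^+(Y) resp. \<mu>^-(Y) gives two points of the hull over x whose heights differ
  by d (\<mu>^+(Y) - \<mu>^-(Y)) plus (1 - 2d) times a difference over x', whereas
  G(x) = d \<Sum>_(\<gamma>(Y)) |a| + (1 - 2d) G(x'). Induction on |Y| concludes for c \<ge> 0;
  for c < 0 the hypothesis at X = V forces a = 0.\<close>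

definition slack :: "real \<Rightarrow> real" where
  "slack t = min t (1 - t)"

definition frac_coords :: "real^'n::finite \<Rightarrow> 'n set" where
  "frac_coords x = {k. 0 < slack (x$k)}"

definition edge_slack :: "real^'n::finite \<Rightarrow> 'n set \<Rightarrow> real" where
  "edge_slack x e = Min ((\<lambda>k. slack (x$k)) ` e)"

definition slack_weight :: "'n::finite set set \<Rightarrow> ('n set \<Rightarrow> real) \<Rightarrow> real^'n \<Rightarrow> real" where
  "slack_weight E a x = (\<Sum>e\<in>E. \<bar>a e\<bar> * edge_slack x e)"

definition shrink_low :: "real \<Rightarrow> real \<Rightarrow> real" where
  "shrink_low d m = max (m - d) 0 / (1 - 2*d)"

text \<open>shrink d maps [d, 1-d] affinely onto [0, 1], collapsing [0, d] to 0 and [1-d, 1] to 1;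
  for d = 1/2 the division by zero makes it rounding at 1/2.\<close>
definition shrink :: "real \<Rightarrow> real \<Rightarrow> real" where
  "shrink d t = (if t \<le> 1/2 then shrink_low d t else 1 - shrink_low d (1 - t))"

definition shrink_point :: "real \<Rightarrow> real^'n::finite \<Rightarrow> real^'n" where
  "shrink_point d x = (\<chi> k. shrink d (x$k))"

definition round_point :: "real^'n::finite \<Rightarrow> 'n set \<Rightarrow> real^'n" where
  "round_point x P = (\<chi> k. if k \<in> frac_coords x then (if k \<in> P then 1 else 0) else x$k)"

lemma slack_bounds: "0 \<le> t \<Longrightarrow> t \<le> 1 \<Longrightarrow> 0 \<le> slack t \<and> slack t \<le> 1/2"
  by (simp add: slack_def min_def)

lemma slack_eq_0_iff: "0 \<le> t \<Longrightarrow> t \<le> 1 \<Longrightarrow> slack t = 0 \<longleftrightarrow> t = 0 \<or> t = 1"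
  by (auto simp: slack_def min_def)

lemma mono_shrink_low: "d \<le> 1/2 \<Longrightarrow> mono (shrink_low d)"
  by (auto simp: mono_def shrink_low_def intro!: divide_right_mono)

lemma shrink_low_bounds:
  assumes "d \<le> 1/2" "m \<le> 1/2"
  shows "0 \<le> shrink_low d m" "shrink_low d m \<le> 1/2"
proof -
  have "max (m - d) 0 \<le> 1/2 * (1 - 2*d)" using assms by (simp add: max_def)
  then show "shrink_low d m \<le> 1/2"
    using assms by (cases "d = 1/2") (auto simp: shrink_low_def divide_le_eq)
qed (use assms in \<open>simp add: shrink_low_def\<close>)

lemma shrink_low_eq: "d \<le> m \<Longrightarrow> m \<le> 1/2 \<Longrightarrow> m = d + (1 - 2*d) * shrink_low d m"
  by (cases "d = 1/2") (auto simp: shrink_low_def)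

lemma shrink_low_split:
  assumes "0 \<le> d" "m \<le> 1/2" "m = 0 \<or> d \<le> m"
  shows "m = d * (if 0 < m then 1 else 0) + (1 - 2*d) * shrink_low d m"
  using assms shrink_low_eq[of d m] by (auto simp: shrink_low_def)

lemma shrink_bounds:
  assumes "0 \<le> t" "t \<le> 1" "d \<le> 1/2"
  shows "0 \<le> shrink d t" "shrink d t \<le> 1"
  using shrink_low_bounds[OF assms(3), of t] shrink_low_bounds[OF assms(3), of "1 - t"] assms
  by (auto simp: shrink_def)

lemma slack_shrink:
  assumes "0 \<le> t" "t \<le> 1" "d \<le> 1/2"
  shows "slack (shrink d t) = shrink_low d (slack t)"
  using shrink_low_bounds[OF assms(3), of t] shrink_low_bounds[OF assms(3), of "1 - t"] assms
  by (auto simp: shrink_def slack_def min_def)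

lemma shrink_decomp:
  assumes "0 \<le> t" "t \<le> 1" "d \<le> slack t"
  shows "t = d + (1 - 2*d) * shrink d t"
proof (cases "t \<le> 1/2")
  case True
  then show ?thesis using shrink_low_eq[of d t] assms by (simp add: shrink_def slack_def)
next
  case False
  then have "1 - t = d + (1 - 2*d) * shrink_low d (1 - t)"
    using shrink_low_eq[of d "1 - t"] assms by (simp add: slack_def)
  then show ?thesis using False by (simp add: shrink_def algebra_simps)
qed

lemma shrink_endpoint: "0 \<le> d \<Longrightarrow> t = 0 \<or> t = 1 \<Longrightarrow> shrink d t = t"
  by (auto simp: shrink_def shrink_low_def)

lemma unitcubeD:
  assumes "x \<in> unitcube" shows "0 \<le> x$k" "x$k \<le> 1"
  using assms by (auto simp: unitcube_def)

lemma shrink_point_unitcube: "x \<in> unitcube \<Longrightarrow> d \<le> 1/2 \<Longrightarrow> shrink_point d x \<in> unitcube"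
  using shrink_bounds unitcubeD by (simp add: unitcube_def shrink_point_def)

lemma round_point_unitcube: "x \<in> unitcube \<Longrightarrow> round_point x P \<in> unitcube"
  by (auto simp: unitcube_def round_point_def)

lemma slack_shrink_point:
  "x \<in> unitcube \<Longrightarrow> d \<le> 1/2 \<Longrightarrow> slack (shrink_point d x $ k) = shrink_low d (slack (x$k))"
  using slack_shrink[OF unitcubeD] by (simp add: shrink_point_def)

lemma frac_coords_shrink_point:
  assumes "x \<in> unitcube" "d \<le> 1/2"
  shows "frac_coords (shrink_point d x) = {k. d < slack (x$k)}"
proof -
  have "0 < shrink_low d (slack (x$k)) \<longleftrightarrow> d < slack (x$k)" for k
    using assms slack_bounds[OF unitcubeD[OF assms(1)], of k]
    by (cases "d = 1/2") (auto simp: shrink_low_def zero_less_divide_iff)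
  then show ?thesis using slack_shrink_point[OF assms] by (simp add: frac_coords_def)
qed

lemma point_decomp:
  assumes x: "x \<in> unitcube" and "0 \<le> d" and d_le: "\<forall>k\<in>frac_coords x. d \<le> slack (x$k)"
  shows "x = d *\<^sub>R round_point x P + d *\<^sub>R round_point x (frac_coords x - P)
             + (1 - 2*d) *\<^sub>R shrink_point d x"
proof -
  have "x$k = d * round_point x P $ k + d * round_point x (frac_coords x - P) $ k
              + (1 - 2*d) * shrink_point d x $ k" for k
  proof (cases "k \<in> frac_coords x")
    case True
    then show ?thesis
      using shrink_decomp[of "x$k" d] unitcubeD[OF x] d_le
      by (auto simp: round_point_def shrink_point_def)
  next
    case False
    then have "slack (x$k) = 0"
      using slack_bounds[OF unitcubeD[OF x], of k] by (auto simp: frac_coords_def less_le)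
    then show ?thesis
      using False shrink_endpoint[OF \<open>0 \<le> d\<close>] slack_eq_0_iff unitcubeD[OF x]
      by (auto simp: round_point_def shrink_point_def algebra_simps)
  qed
  then show ?thesis by (simp add: vec_eq_iff)
qed

lemma edge_slack_shrink_point:
  assumes x: "x \<in> unitcube" and d: "0 \<le> d" "d \<le> 1/2"
    and d_le: "\<forall>k\<in>frac_coords x. d \<le> slack (x$k)" and e: "finite e" "e \<noteq> {}"
  shows "edge_slack x e
         = d * (if e \<subseteq> frac_coords x then 1 else 0) + (1 - 2*d) * edge_slack (shrink_point d x) e"
proof -
  let ?m = "edge_slack x e"
  have "?m \<in> (\<lambda>k. slack (x$k)) ` e"
    unfolding edge_slack_def using e by (intro Min_in) auto
  then obtain k where k: "k \<in> e" "?m = slack (x$k)" by blast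
  have pos_iff: "0 < ?m \<longleftrightarrow> e \<subseteq> frac_coords x"
    using e by (auto simp: edge_slack_def frac_coords_def)
  have m_cases: "?m = 0 \<or> d \<le> ?m"
    using k d_le slack_bounds[OF unitcubeD[OF x], of k] by (auto simp: frac_coords_def less_le)
  have "?m = d * (if 0 < ?m then 1 else 0) + (1 - 2*d) * shrink_low d ?m"
    by (rule shrink_low_split[OF d(1) _ m_cases]) (use k slack_bounds[OF unitcubeD[OF x], of k] in simp)
  also have "shrink_low d ?m = edge_slack (shrink_point d x) e"
    using mono_Min_commute[OF mono_shrink_low[OF d(2)] finite_imageI[OF e(1)]] e(2)
    by (simp add: edge_slack_def slack_shrink_point[OF x d(2)] image_image)
  finally show ?thesis using pos_iff by simp
qed

lemma graph_edge:
  assumes "graph E" "e \<in> E" obtains i j where "i \<noteq> j" "e = {i, j}"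
  using assms by (auto simp: graph_def card_2_iff)

lemma slack_weight_vertex:
  assumes "graph E" "x \<in> unitcube" "frac_coords x = {}"
  shows "slack_weight E a x = 0"
proof -
  have "slack (x$k) = 0" for k
    using assms(3) slack_bounds[OF unitcubeD[OF assms(2)], of k] by (auto simp: frac_coords_def less_le)
  moreover have "e \<noteq> {}" if "e \<in> E" for e
    using graph_edge[OF assms(1) that] by blast
  ultimately have "edge_slack x e = 0" if "e \<in> E" for e
    using that by (simp add: edge_slack_def image_constant_conv)
  then show ?thesis by (simp add: slack_weight_def)
qed

lemma slack_weight_shrink_point:
  assumes "graph E" "x \<in> unitcube" "0 \<le> d" "d \<le> 1/2"
    and "\<forall>k\<in>frac_coords x. d \<le> slack (x$k)"
  shows "slack_weight E a x
         = d * (\<Sum>e\<in>gammaE E (frac_coords x). \<bar>a e\<bar>) + (1 - 2*d) * slack_weight E a (shrink_point d x)"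
proof -
  have "slack_weight E a x = (\<Sum>e\<in>E. d * (if e \<subseteq> frac_coords x then \<bar>a e\<bar> else 0)
          + (1 - 2*d) * (\<bar>a e\<bar> * edge_slack (shrink_point d x) e))"
    unfolding slack_weight_def
  proof (rule sum.cong[OF refl])
    fix e assume "e \<in> E"
    then obtain i j where "e = {i, j}" using graph_edge[OF assms(1)] by metis
    then have "finite e" "e \<noteq> {}" by auto
    then show "\<bar>a e\<bar> * edge_slack x e = d * (if e \<subseteq> frac_coords x then \<bar>a e\<bar> else 0)
          + (1 - 2*d) * (\<bar>a e\<bar> * edge_slack (shrink_point d x) e)"
      unfolding edge_slack_shrink_point[OF assms(2-5) \<open>finite e\<close> \<open>e \<noteq> {}\<close>]
      by (cases "e \<subseteq> frac_coords x") (simp_all add: algebra_simps)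
  qed
  also have "\<dots> = d * (\<Sum>e\<in>gammaE E (frac_coords x). \<bar>a e\<bar>)
      + (1 - 2*d) * slack_weight E a (shrink_point d x)"
    by (simp add: sum.distrib sum_distrib_left slack_weight_def gammaE_def sum.inter_filter)
  finally show ?thesis .
qed

lemma edge_round_cut:
  assumes "card e = 2" "P \<subseteq> frac_coords x"
  shows "(\<Prod>k\<in>e. round_point x P $ k) + (\<Prod>k\<in>e. round_point x (frac_coords x - P) $ k)
       + (if e \<inter> P \<noteq> {} \<and> e \<inter> (frac_coords x - P) \<noteq> {} then 1 else 0)
       = (\<Prod>k\<in>e. round_point x {} $ k) + (\<Prod>k\<in>e. round_point x (frac_coords x) $ k)"
proof -
  obtain i j where "i \<noteq> j" "e = {i, j}" using assms(1) by (auto simp: card_2_iff)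
  then show ?thesis using assms(2)
    by (cases "i \<in> frac_coords x"; cases "j \<in> frac_coords x"; cases "i \<in> P"; cases "j \<in> P")
       (auto simp: round_point_def)
qed

lemma bilin_round_cut:
  assumes "graph E" "P \<subseteq> frac_coords x"
  shows "bilin E a (round_point x P) + bilin E a (round_point x (frac_coords x - P))
       = bilin E a (round_point x {}) + bilin E a (round_point x (frac_coords x))
         - (\<Sum>e\<in>deltaE E P (frac_coords x - P). a e)"
proof -
  let ?Y = "frac_coords x"
  have "(\<Sum>e\<in>deltaE E P (?Y - P). a e)
      = (\<Sum>e\<in>E. if e \<inter> P \<noteq> {} \<and> e \<inter> (?Y - P) \<noteq> {} then a e else 0)"
    by (simp add: deltaE_def sum.inter_filter)
  also have "\<dots> = (\<Sum>e\<in>E. a e * (\<Prod>k\<in>e. round_point x {} $ k) + a e * (\<Prod>k\<in>e. round_point x ?Y $ k)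
      - a e * (\<Prod>k\<in>e. round_point x P $ k) - a e * (\<Prod>k\<in>e. round_point x (?Y - P) $ k))"
  proof (rule sum.cong[OF refl])
    fix e assume "e \<in> E"
    let ?cut = "e \<inter> P \<noteq> {} \<and> e \<inter> (?Y - P) \<noteq> {}"
    let ?p = "\<lambda>Q. \<Prod>k\<in>e. round_point x Q $ k"
    have "card e = 2" using \<open>e \<in> E\<close> assms(1) by (simp add: graph_def)
    from edge_round_cut[OF this assms(2)]
    have cut: "(if ?cut then 1 else 0) = ?p {} + ?p ?Y - ?p P - ?p (?Y - P)" by linarith
    have "(if ?cut then a e else 0) = a e * (if ?cut then 1 else 0)" by simp
    also have "\<dots> = a e * (?p {} + ?p ?Y - ?p P - ?p (?Y - P))" by (simp only: cut)
    finally show "(if ?cut then a e else 0) = a e * ?p {} + a e * ?p ?Y - a e * ?p P - a e * ?p (?Y - P)"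
      by (simp add: algebra_simps)
  qed
  finally show ?thesis
    unfolding bilin_def by (simp only: sum_subtractf sum.distrib)
qed

subsection \<open>Extremal cuts\<close>

lemma cut_weights_eq:
  "{\<Sum>e\<in>deltaE E U1 U2. a e | U1 U2. U1 \<union> U2 = X \<and> U1 \<inter> U2 = {}}
   = (\<lambda>U. \<Sum>e\<in>deltaE E U (X - U). a e) ` Pow X"
proof (intro set_eqI iffI)
  fix s assume "s \<in> {\<Sum>e\<in>deltaE E U1 U2. a e | U1 U2. U1 \<union> U2 = X \<and> U1 \<inter> U2 = {}}"
  then obtain U1 U2 where "s = (\<Sum>e\<in>deltaE E U1 U2. a e)" "U1 \<union> U2 = X" "U1 \<inter> U2 = {}"
    by blast
  moreover from this have "U2 = X - U1" by blast
  ultimately show "s \<in> (\<lambda>U. \<Sum>e\<in>deltaE E U (X - U). a e) ` Pow X"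
    by (intro image_eqI[where x = U1]) auto
next
  fix s assume "s \<in> (\<lambda>U. \<Sum>e\<in>deltaE E U (X - U). a e) ` Pow X"
  then obtain U where "U \<subseteq> X" "s = (\<Sum>e\<in>deltaE E U (X - U). a e)" by auto
  then show "s \<in> {\<Sum>e\<in>deltaE E U1 U2. a e | U1 U2. U1 \<union> U2 = X \<and> U1 \<inter> U2 = {}}"
    by (intro CollectI exI[of _ U] exI[of _ "X - U"]) auto
qed

lemma
  fixes X :: "'n::finite set"
  shows mu_plus_attained: "\<exists>P\<subseteq>X. (\<Sum>e\<in>deltaE E P (X - P). a e) = mu_plus E a X"
    and mu_minus_attained: "\<exists>P\<subseteq>X. (\<Sum>e\<in>deltaE E P (X - P). a e) = mu_minus E a X"
    and mu_minus_le_mu_plus: "mu_minus E a X \<le> mu_plus E a X"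
proof -
  let ?S = "(\<lambda>U. \<Sum>e\<in>deltaE E U (X - U). a e) ` Pow X"
  have S: "finite ?S" "?S \<noteq> {}" by auto
  show "\<exists>P\<subseteq>X. (\<Sum>e\<in>deltaE E P (X - P). a e) = mu_plus E a X"
    using Max_in[OF S] by (auto simp: mu_plus_def cut_weights_eq)
  show "\<exists>P\<subseteq>X. (\<Sum>e\<in>deltaE E P (X - P). a e) = mu_minus E a X"
    using Min_in[OF S] by (auto simp: mu_minus_def cut_weights_eq)
  show "mu_minus E a X \<le> mu_plus E a X"
    using Min_le[OF S(1) Max_in[OF S]] by (simp add: mu_plus_def mu_minus_def cut_weights_eq)
qed

lemma coeffs_0_if_neg_constant:
  assumes "c < 0"
    and "\<forall>X. (\<Sum>e\<in>gammaE E X. \<bar>a e\<bar>) \<le> c * (mu_plus E a X - mu_minus E a X)"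
  shows "\<forall>e\<in>E. a e = 0"
proof -
  have "(\<Sum>e\<in>E. \<bar>a e\<bar>) \<le> c * (mu_plus E a UNIV - mu_minus E a UNIV)"
    using assms(2)[rule_format, of UNIV] by (simp add: gammaE_def)
  also have "\<dots> \<le> 0"
    using assms(1) mu_minus_le_mu_plus by (intro mult_nonpos_nonneg) auto
  finally have "(\<Sum>e\<in>E. \<bar>a e\<bar>) = 0" by (simp add: antisym sum_nonneg)
  then show ?thesis by (simp add: sum_nonneg_eq_0_iff)
qed

subsection \<open>The convex hull of the graph of b\<close>

lemma convex_comb3:
  assumes "convex S" "p \<in> S" "q \<in> S" "r \<in> S" "0 \<le> d" "d \<le> 1/2"
  shows "d *\<^sub>R p + d *\<^sub>R q + (1 - 2*d) *\<^sub>R r \<in> S"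
proof -
  have "(1/2) *\<^sub>R p + (1/2) *\<^sub>R q \<in> S" using assms(1-3) by (intro convexD) auto
  then have "(2*d) *\<^sub>R ((1/2) *\<^sub>R p + (1/2) *\<^sub>R q) + (1 - 2*d) *\<^sub>R r \<in> S"
    using assms by (intro convexD) auto
  then show ?thesis by (simp add: scaleR_right_distrib)
qed

lemma bilin_abs_le:
  assumes "x \<in> unitcube"
  shows "\<bar>bilin E a x\<bar> \<le> (\<Sum>e\<in>E. \<bar>a e\<bar>)"
proof -
  have "\<bar>bilin E a x\<bar> \<le> (\<Sum>e\<in>E. \<bar>a e\<bar> * \<bar>\<Prod>i\<in>e. x$i\<bar>)"
    unfolding bilin_def abs_mult[symmetric] by (rule sum_abs)
  also have "\<dots> \<le> (\<Sum>e\<in>E. \<bar>a e\<bar>)"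
    using unitcubeD[OF assms]
    by (intro sum_mono mult_right_le_one_le) (auto simp: abs_prod intro!: prod_le_1 prod_nonneg)
  finally show ?thesis .
qed

lemma hull_graphB_abs_le:
  assumes "(x, z) \<in> convex hull (graphB E a)"
  shows "\<bar>z\<bar> \<le> (\<Sum>e\<in>E. \<bar>a e\<bar>)"
proof -
  let ?K = "\<Sum>e\<in>E. \<bar>a e\<bar>"
  have "graphB E a \<subseteq> UNIV \<times> cball 0 ?K"
    using bilin_abs_le by (auto simp: graphB_def)
  then have "convex hull (graphB E a) \<subseteq> UNIV \<times> cball 0 ?K"
    by (intro hull_minimal convex_Times convex_UNIV convex_cball)
  then show ?thesis using assms by auto
qed

lemma hull_fibre_diff_le_chgap:
  assumes "(x, z1) \<in> convex hull (graphB E a)" "(x, z2) \<in> convex hull (graphB E a)"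
  shows "z1 - z2 \<le> chgap E a x"
proof -
  let ?F = "{z. (x, z) \<in> convex hull (graphB E a)}"
  let ?K = "\<Sum>e\<in>E. \<bar>a e\<bar>"
  have K: "\<bar>z\<bar> \<le> ?K" if "z \<in> ?F" for z using hull_graphB_abs_le that by blast
  have "bdd_above ?F" by (rule bdd_aboveI[of _ ?K]) (use K in \<open>auto simp: abs_le_iff\<close>)
  moreover have "bdd_below ?F" by (rule bdd_belowI[of _ "- ?K"]) (use K in \<open>force simp: abs_le_iff\<close>)
  ultimately have "z1 \<le> Sup ?F" "Inf ?F \<le> z2"
    using assms by (auto intro: cSup_upper cInf_lower)
  then show ?thesis by (simp add: chgap_def cav_def vex_def)
qed

lemma chgap_eq_0_if_coeffs_0:
  assumes "x \<in> unitcube" "\<forall>e\<in>E. a e = 0"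
  shows "chgap E a x = 0"
proof -
  have "{z. (x, z) \<in> convex hull (graphB E a)} = {0}"
  proof
    show "{z. (x, z) \<in> convex hull (graphB E a)} \<subseteq> {0}"
      using hull_graphB_abs_le[of x _ E a] assms(2) by auto
    have "(x, bilin E a x) \<in> convex hull (graphB E a)"
      by (rule hull_inc) (simp add: graphB_def assms(1))
    then show "{0} \<subseteq> {z. (x, z) \<in> convex hull (graphB E a)}"
      using assms(2) by (simp add: bilin_def)
  qed
  then show ?thesis by (simp add: chgap_def cav_def vex_def)
qed

lemma hull_graphB_round_step:
  assumes x: "x \<in> unitcube" and d: "0 \<le> d" "d \<le> 1/2"
    and d_le: "\<forall>k\<in>frac_coords x. d \<le> slack (x$k)"
    and z: "(shrink_point d x, z) \<in> convex hull (graphB E a)"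
  shows "(x, d * bilin E a (round_point x P) + d * bilin E a (round_point x (frac_coords x - P))
            + (1 - 2*d) * z) \<in> convex hull (graphB E a)"
proof -
  have "(round_point x Q, bilin E a (round_point x Q)) \<in> convex hull (graphB E a)" for Q
    by (rule hull_inc) (simp add: graphB_def round_point_unitcube[OF x])
  from convex_comb3[OF convex_convex_hull this this z d]
  have "d *\<^sub>R (round_point x P, bilin E a (round_point x P))
      + d *\<^sub>R (round_point x (frac_coords x - P), bilin E a (round_point x (frac_coords x - P)))
      + (1 - 2*d) *\<^sub>R (shrink_point d x, z) \<in> convex hull (graphB E a)" .
  moreover note point_decomp[OF x d(1) d_le, of P]
  ultimately show ?thesis by (simp add: prod_eq_iff)
qed

lemma hull_gap_step:
  assumes "graph E" and x: "x \<in> unitcube" and d: "0 \<le> d" "d \<le> 1/2"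
    and d_le: "\<forall>k\<in>frac_coords x. d \<le> slack (x$k)"
    and z: "(shrink_point d x, z1) \<in> convex hull (graphB E a)"
           "(shrink_point d x, z2) \<in> convex hull (graphB E a)"
  obtains w1 w2 where "(x, w1) \<in> convex hull (graphB E a)" "(x, w2) \<in> convex hull (graphB E a)"
    and "w1 - w2 = d * (mu_plus E a (frac_coords x) - mu_minus E a (frac_coords x)) + (1 - 2*d) * (z1 - z2)"
proof -
  let ?Y = "frac_coords x"
  let ?w = "\<lambda>P z. d * bilin E a (round_point x P) + d * bilin E a (round_point x (?Y - P)) + (1 - 2*d) * z"
  let ?K = "bilin E a (round_point x {}) + bilin E a (round_point x ?Y)"
  have w: "?w P z = d * (?K - (\<Sum>e\<in>deltaE E P (?Y - P). a e)) + (1 - 2*d) * z" if "P \<subseteq> ?Y" for P z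
    by (simp only: distrib_left[symmetric] bilin_round_cut[OF assms(1) that])
  obtain P1 where P1: "P1 \<subseteq> ?Y" "(\<Sum>e\<in>deltaE E P1 (?Y - P1). a e) = mu_plus E a ?Y"
    using mu_plus_attained by blast
  obtain P2 where P2: "P2 \<subseteq> ?Y" "(\<Sum>e\<in>deltaE E P2 (?Y - P2). a e) = mu_minus E a ?Y"
    using mu_minus_attained by blast
  have "?w P2 z1 - ?w P1 z2 = d * (mu_plus E a ?Y - mu_minus E a ?Y) + (1 - 2*d) * (z1 - z2)"
    unfolding w[OF P1(1)] w[OF P2(1)] P1(2) P2(2) by (simp add: algebra_simps)
  from that[OF hull_graphB_round_step[OF x d d_le z(1)] hull_graphB_round_step[OF x d d_le z(2)] this]
  show thesis .
qed

lemma slack_weight_le_hull_gap: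
  assumes "graph E"
    and hyp: "\<forall>X. (\<Sum>e\<in>gammaE E X. \<bar>a e\<bar>) \<le> c * (mu_plus E a X - mu_minus E a X)"
    and "x \<in> unitcube"
  shows "\<exists>z1 z2. (x, z1) \<in> convex hull (graphB E a) \<and> (x, z2) \<in> convex hull (graphB E a)
           \<and> slack_weight E a x \<le> c * (z1 - z2)"
  using assms(3)
proof (induction "card (frac_coords x)" arbitrary: x rule: less_induct)
  case less
  let ?Y = "frac_coords x"
  show ?case
  proof (cases "?Y = {}")
    case True
    have "(x, bilin E a x) \<in> convex hull (graphB E a)"
      by (rule hull_inc) (simp add: graphB_def less.prems)
    then show ?thesis using slack_weight_vertex[OF assms(1) less.prems True]
      by (intro exI[of _ "bilin E a x"] conjI) simp_all
  next
    case False
    define d where "d = Min ((\<lambda>k. slack (x$k)) ` ?Y)"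
    have "d \<in> (\<lambda>k. slack (x$k)) ` ?Y" unfolding d_def using False by (intro Min_in) auto
    then obtain k0 where k0: "k0 \<in> ?Y" "slack (x$k0) = d" by auto
    have d_le: "\<forall>k\<in>?Y. d \<le> slack (x$k)" by (simp add: d_def)
    have d: "0 < d" "d \<le> 1/2"
      using k0 slack_bounds[OF unitcubeD[OF less.prems], of k0] by (auto simp: frac_coords_def)
    have "frac_coords (shrink_point d x) = {k. d < slack (x$k)}"
      by (rule frac_coords_shrink_point[OF less.prems d(2)])
    also have "\<dots> \<subset> ?Y"
      using k0 d(1) by (auto simp: frac_coords_def)
    finally have "card (frac_coords (shrink_point d x)) < card ?Y" by (simp add: psubset_card_mono)
    from less.hyps[OF this shrink_point_unitcube[OF less.prems d(2)]]
    obtain z1 z2 where z: "(shrink_point d x, z1) \<in> convex hull (graphB E a)"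
      "(shrink_point d x, z2) \<in> convex hull (graphB E a)"
      "slack_weight E a (shrink_point d x) \<le> c * (z1 - z2)" by blast
    obtain w1 w2 where w: "(x, w1) \<in> convex hull (graphB E a)" "(x, w2) \<in> convex hull (graphB E a)"
      "w1 - w2 = d * (mu_plus E a ?Y - mu_minus E a ?Y) + (1 - 2*d) * (z1 - z2)"
      using hull_gap_step[OF assms(1) less.prems less_imp_le[OF d(1)] d(2) d_le z(1,2)] by blast
    have "slack_weight E a x
        = d * (\<Sum>e\<in>gammaE E ?Y. \<bar>a e\<bar>) + (1 - 2*d) * slack_weight E a (shrink_point d x)"
      using slack_weight_shrink_point[OF assms(1) less.prems less_imp_le[OF d(1)] d(2) d_le] .
    also have "\<dots> \<le> d * (c * (mu_plus E a ?Y - mu_minus E a ?Y)) + (1 - 2*d) * (c * (z1 - z2))"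
      using hyp d z(3) by (intro add_mono mult_left_mono) auto
    also have "\<dots> = c * (w1 - w2)" unfolding w(3) by (simp add: algebra_simps)
    finally show ?thesis using w(1,2) by (intro exI[of _ w1] exI[of _ w2] conjI)
  qed
qed

subsection \<open>McCormick relaxation\<close>

lemma mcP_edge_diff_le:
  assumes "graph E" "e \<in> E" "mcP E x y" "mcP E x y'"
  shows "y e - y' e \<le> edge_slack x e"
proof -
  obtain i j where ij: "i \<noteq> j" "e = {i, j}" using graph_edge[OF assms(1,2)] .
  then have "edge_slack x e = min (slack (x$i)) (slack (x$j))" by (simp add: edge_slack_def)
  moreover have "y e \<le> x$i" "y e \<le> x$j" "0 \<le> y' e" "x$i + x$j - 1 \<le> y' e"
    using assms(2-4) ij by (auto simp: mcP_def)
  ultimately show ?thesis by (simp add: slack_def)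
qed

lemma mcQ_fibre_nonempty:
  assumes "graph E" "x \<in> unitcube"
  shows "{z. (x, z) \<in> mcQ E a} \<noteq> {}"
proof -
  define y where "y e = max 0 ((\<Sum>i\<in>e. x$i) - 1)" for e
  have "0 \<le> y e \<and> y e \<le> 1 \<and> (\<forall>k\<in>e. y e \<le> x$k) \<and> (\<Sum>i\<in>e. x$i) - 1 \<le> y e" if e: "e \<in> E" for e
  proof -
    obtain i j where "i \<noteq> j" "e = {i, j}" using graph_edge[OF assms(1) e] .
    then show ?thesis
      using unitcubeD[OF assms(2), of i] unitcubeD[OF assms(2), of j] by (auto simp: y_def)
  qed
  then have "mcP E x y" using assms(2) by (simp add: mcP_def)
  then show ?thesis by (auto simp: mcQ_def)
qed

lemma Sup_minus_Inf_le:
  fixes S :: "real set"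
  assumes "S \<noteq> {}" and "\<And>z z'. z \<in> S \<Longrightarrow> z' \<in> S \<Longrightarrow> z - z' \<le> K"
  shows "Sup S - Inf S \<le> K"
proof -
  have "Sup S \<le> Inf S + K"
  proof (rule cSup_least[OF assms(1)])
    fix z assume "z \<in> S"
    have "z - K \<le> Inf S"
      by (rule cInf_greatest[OF assms(1)]) (use assms(2) \<open>z \<in> S\<close> in force)
    then show "z \<le> Inf S + K" by simp
  qed
  then show ?thesis by simp
qed

lemma mcgap_le_slack_weight:
  assumes "graph E" "x \<in> unitcube"
  shows "mcgap E a x \<le> slack_weight E a x"
proof -
  have "z - z' \<le> slack_weight E a x" if "(x, z) \<in> mcQ E a" "(x, z') \<in> mcQ E a" for z z'
  proof -
    obtain y where y: "mcP E x y" "z = (\<Sum>e\<in>E. a e * y e)"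
      using \<open>(x, z) \<in> mcQ E a\<close> unfolding mcQ_def by blast
    obtain y' where y': "mcP E x y'" "z' = (\<Sum>e\<in>E. a e * y' e)"
      using \<open>(x, z') \<in> mcQ E a\<close> unfolding mcQ_def by blast
    have "z - z' = (\<Sum>e\<in>E. a e * (y e - y' e))"
      by (simp add: y(2) y'(2) sum_subtractf right_diff_distrib)
    also have "\<dots> \<le> slack_weight E a x"
      unfolding slack_weight_def
    proof (rule sum_mono)
      fix e assume "e \<in> E"
      have diff: "\<bar>y e - y' e\<bar> \<le> edge_slack x e"
        using mcP_edge_diff_le[OF assms(1) \<open>e \<in> E\<close> y(1) y'(1)]
          mcP_edge_diff_le[OF assms(1) \<open>e \<in> E\<close> y'(1) y(1)]
        by linarith
      have "a e * (y e - y' e) \<le> \<bar>a e\<bar> * \<bar>y e - y' e\<bar>" by (metis abs_ge_self abs_mult)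
      also have "\<dots> \<le> \<bar>a e\<bar> * edge_slack x e" using diff by (simp add: mult_left_mono)
      finally show "a e * (y e - y' e) \<le> \<bar>a e\<bar> * edge_slack x e" .
    qed
    finally show ?thesis .
  qed
  then show ?thesis
    unfolding mcgap_def mcu_def mcl_def
    by (intro Sup_minus_Inf_le mcQ_fibre_nonempty[OF assms]) auto
qed

theorem corollary1:
  fixes E :: "'n::finite set set" and a :: "'n set \<Rightarrow> real" and c :: real
  assumes "graph E"
    and "\<forall>X. (\<Sum>e\<in>gammaE E X. \<bar>a e\<bar>) \<le> c * (mu_plus E a X - mu_minus E a X)"
  shows "\<forall>x\<in>unitcube. mcgap E a x \<le> c * chgap E a x"
proof
  fix x :: "real^'n" assume x: "x \<in> unitcube"
  show "mcgap E a x \<le> c * chgap E a x"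
  proof (cases "0 \<le> c")
    case True
    obtain z1 z2 where z: "(x, z1) \<in> convex hull (graphB E a)" "(x, z2) \<in> convex hull (graphB E a)"
      "slack_weight E a x \<le> c * (z1 - z2)"
      using slack_weight_le_hull_gap[OF assms x] by blast
    have "mcgap E a x \<le> slack_weight E a x" by (rule mcgap_le_slack_weight[OF assms(1) x])
    also have "\<dots> \<le> c * (z1 - z2)" by (rule z(3))
    also have "\<dots> \<le> c * chgap E a x" using hull_fibre_diff_le_chgap[OF z(1,2)] True by (rule mult_left_mono)
    finally show ?thesis .
  next
    case False
    then have "c < 0" by simp
    then have "\<forall>e\<in>E. a e = 0" by (rule coeffs_0_if_neg_constant[OF _ assms(2)])
    then show ?thesis
      using mcgap_le_slack_weight[OF assms(1) x, of a] chgap_eq_0_if_coeffs_0[OF x]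
      by (simp add: slack_weight_def)
  qed
qed

end
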